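(* Let $f,g\colon M^n\to\mathbb{R}^N$ be immersions and let $\Phi$ be a $(1,1)$-tensor field on $M^n$ with $g_*=f_*\circ\Phi$. Let $\nabla,\tilde\nabla$ be the Levi-Civita connections of the metrics induced by $f$ and $g$, respectively, and $\alpha_f,\alpha_g$ their second fundamental forms. Then for all $X,Y\in TM$, $$\Phi\tilde\nabla_XY=\nabla_X\Phi Y\quad\text{and}\quad \alpha_g(X,Y)=\alpha_f(\Phi X,Y).$$
   Context: Since $g_*(T_pM)=f_*(T_pM)$, the normal spaces of $f$ and $g$ at each point coincide, so $\alpha_g$ and $\alpha_f$ take values in the same normal bundle. *)

theory Defs
  imports "HOL-Analysis.Analysis"
begin

text \<open>Local model: the manifold M is an open set U in a Euclidean space 'a (= R^n),
  the ambient space is a Euclidean space 'b (= R^N).  Vector fields on U are maps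
  U -> 'a (coordinate representation).\<close>

coinductive smooth_on :: "'a::euclidean_space set \<Rightarrow> ('a \<Rightarrow> 'b::real_normed_vector) \<Rightarrow> bool" where
  "continuous_on U f \<Longrightarrow> f differentiable_on U \<Longrightarrow>
   (\<forall>v. smooth_on U (\<lambda>x. frechet_derivative f (at x) v)) \<Longrightarrow> smooth_on U f"

definition dd :: "('a::euclidean_space \<Rightarrow> 'b::real_normed_vector) \<Rightarrow> ('a \<Rightarrow> 'a) \<Rightarrow> 'a \<Rightarrow> 'b" where
  "dd h X x = frechet_derivative h (at x) (X x)"

definition immersion :: "'a::euclidean_space set \<Rightarrow> ('a \<Rightarrow> 'b::euclidean_space) \<Rightarrow> bool" where
  "immersion U f \<longleftrightarrow> smooth_on U f \<and> (\<forall>x\<in>U. inj (frechet_derivative f (at x)))"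

definition push :: "('a::euclidean_space \<Rightarrow> 'b::euclidean_space) \<Rightarrow> ('a \<Rightarrow> 'a) \<Rightarrow> 'a \<Rightarrow> 'b" where
  "push f Y x = frechet_derivative f (at x) (Y x)"

definition induced_metric :: "('a::euclidean_space \<Rightarrow> 'b::euclidean_space) \<Rightarrow> 'a \<Rightarrow> 'a \<Rightarrow> 'a \<Rightarrow> real" where
  "induced_metric f x u v = frechet_derivative f (at x) u \<bullet> frechet_derivative f (at x) v"

definition levi_civita :: "'a::euclidean_space set \<Rightarrow> ('a \<Rightarrow> 'a \<Rightarrow> 'a \<Rightarrow> real)
    \<Rightarrow> (('a \<Rightarrow> 'a) \<Rightarrow> ('a \<Rightarrow> 'a) \<Rightarrow> 'a \<Rightarrow> 'a) \<Rightarrow> bool" where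
  "levi_civita U G nab \<longleftrightarrow>
    (\<forall>X Y. smooth_on U X \<longrightarrow> smooth_on U Y \<longrightarrow> smooth_on U (nab X Y)) \<and>
    (\<forall>X1 X2 Y x. smooth_on U X1 \<longrightarrow> smooth_on U X2 \<longrightarrow> smooth_on U Y \<longrightarrow> x \<in> U \<longrightarrow>
        nab (\<lambda>y. X1 y + X2 y) Y x = nab X1 Y x + nab X2 Y x) \<and>
    (\<forall>X Y1 Y2 x. smooth_on U X \<longrightarrow> smooth_on U Y1 \<longrightarrow> smooth_on U Y2 \<longrightarrow> x \<in> U \<longrightarrow>
        nab X (\<lambda>y. Y1 y + Y2 y) x = nab X Y1 x + nab X Y2 x) \<and>
    (\<forall>h X Y x. smooth_on U h \<longrightarrow> smooth_on U X \<longrightarrow> smooth_on U Y \<longrightarrow> x \<in> U \<longrightarrow>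
        nab (\<lambda>y. h y *\<^sub>R X y) Y x = h x *\<^sub>R nab X Y x) \<and>
    (\<forall>h X Y x. smooth_on U h \<longrightarrow> smooth_on U X \<longrightarrow> smooth_on U Y \<longrightarrow> x \<in> U \<longrightarrow>
        nab X (\<lambda>y. h y *\<^sub>R Y y) x = dd h X x *\<^sub>R Y x + h x *\<^sub>R nab X Y x) \<and>
    (\<forall>X Y x. smooth_on U X \<longrightarrow> smooth_on U Y \<longrightarrow> x \<in> U \<longrightarrow>
        nab X Y x - nab Y X x = dd Y X x - dd X Y x) \<and>
    (\<forall>X Y Z x. smooth_on U X \<longrightarrow> smooth_on U Y \<longrightarrow> smooth_on U Z \<longrightarrow> x \<in> U \<longrightarrow>
        dd (\<lambda>y. G y (Y y) (Z y)) X x = G x (nab X Y x) (Z x) + G x (Y x) (nab X Z x))"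

definition normal_part :: "('a::euclidean_space \<Rightarrow> 'b::euclidean_space) \<Rightarrow> 'a \<Rightarrow> 'b \<Rightarrow> 'b" where
  "normal_part f x w = (THE n. (\<forall>v. n \<bullet> frechet_derivative f (at x) v = 0) \<and>
                                 w - n \<in> range (frechet_derivative f (at x)))"

definition sff :: "('a::euclidean_space \<Rightarrow> 'b::euclidean_space) \<Rightarrow> ('a \<Rightarrow> 'a) \<Rightarrow> ('a \<Rightarrow> 'a) \<Rightarrow> 'a \<Rightarrow> 'b" where
  "sff f X Y x = normal_part f x (dd (push f Y) X x)"

end

theory Submission
  imports Defs
begin

text \<open>Since \<open>g\<^sub>* = f\<^sub>* \<circ> \<Phi>\<close>, the immersions \<open>f\<close> and \<open>g\<close> have the same tangent spaces, hence the
  same normal projection, and \<open>g\<^sub>*Y = f\<^sub>*(\<Phi>Y)\<close> as ambient vector fields, so that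
  \<open>D\<^sub>X g\<^sub>*Y = D\<^sub>X f\<^sub>*(\<Phi>Y)\<close> for the flat derivative \<open>D\<close> of the ambient space. Normal parts give
  \<open>\<alpha>\<^sub>g(X,Y) = \<alpha>\<^sub>f(X,\<Phi>Y)\<close>, which becomes \<open>\<alpha>\<^sub>f(\<Phi>X,Y)\<close> by the symmetry of second fundamental
  forms (Schwarz's theorem). Tangential parts, via the Gauss formula
  \<open>D\<^sub>X f\<^sub>*W = f\<^sub>*\<nabla>\<^sub>XW + \<alpha>\<^sub>f(X,W)\<close>, give \<open>f\<^sub>*(\<Phi>\<tilde>\<nabla>\<^sub>XY) = g\<^sub>*\<tilde>\<nabla>\<^sub>XY = f\<^sub>*\<nabla>\<^sub>X\<Phi>Y\<close>,
  and \<open>f\<^sub>*\<close> is injective.\<close>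

section \<open>Smooth functions\<close>

lemma frechet_derivative_cong_open:
  assumes "open U" "x \<in> U" "\<And>y. y \<in> U \<Longrightarrow> h y = k y"
  shows "frechet_derivative h (at x) = frechet_derivative k (at x)"
proof -
  have "(h has_derivative h') (at x) \<longleftrightarrow> (k has_derivative h') (at x)" for h'
    using has_derivative_transform_within_open[OF _ assms(1,2), of h h' UNIV k]
      has_derivative_transform_within_open[OF _ assms(1,2), of k h' UNIV h] assms(3) by auto
  then show ?thesis unfolding frechet_derivative_def by simp
qed

lemma smooth_on_coinduct_open:
  assumes U: "open U" and "P h" and "\<And>y. y \<in> U \<Longrightarrow> h y = k y"
    and diff: "\<And>h. P h \<Longrightarrow> h differentiable_on U"
    and deriv: "\<And>h v. P h \<Longrightarrow> \<exists>h'. P h' \<and> (\<forall>y\<in>U. frechet_derivative h (at y) v = h' y)"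
  shows "smooth_on U k"
proof -
  have "\<exists>h. P h \<and> (\<forall>y\<in>U. h y = k y)" using assms(2,3) by blast
  then show ?thesis
  proof (coinduction arbitrary: k)
    case (smooth_on k)
    then obtain h where h: "P h" "\<forall>y\<in>U. h y = k y" by blast
    have "k differentiable_on U"
      using diff[OF h(1)] h(2) unfolding differentiable_on_eq_differentiable_at[OF U]
      by (metis U differentiable_def has_derivative_transform_within_open)
    moreover have "\<exists>h'. P h' \<and> (\<forall>y\<in>U. h' y = frechet_derivative k (at y) v)" for v
      using deriv[OF h(1), of v] frechet_derivative_cong_open[OF U, of _ h k] h(2) by metis
    ultimately show ?case by (auto intro: differentiable_imp_continuous_on)
  qed
qed

lemma smooth_onD:
  assumes "smooth_on U h"
  shows "h differentiable_on U" "smooth_on U (\<lambda>x. frechet_derivative h (at x) v)"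
  using assms by (auto elim: smooth_on.cases)

lemma smooth_on_has_derivative:
  assumes "open U" "smooth_on U h" "x \<in> U"
  shows "(h has_derivative frechet_derivative h (at x)) (at x)"
  using smooth_onD(1)[OF assms(2)] assms
  by (simp add: differentiable_on_eq_differentiable_at frechet_derivative_works)

lemma smooth_on_linear_frechet_derivative:
  assumes "open U" "smooth_on U h" "x \<in> U"
  shows "linear (frechet_derivative h (at x))"
  using smooth_on_has_derivative[OF assms] has_derivative_linear by blast

lemma smooth_on_cong:
  assumes "open U" "smooth_on U h" "\<And>y. y \<in> U \<Longrightarrow> h y = k y"
  shows "smooth_on U k"
  by (rule smooth_on_coinduct_open[OF assms(1), where P="smooth_on U", OF assms(2,3)])
    (auto dest: smooth_onD)

lemma smooth_on_const: "smooth_on U (\<lambda>_. c)"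
  by (coinduction arbitrary: c) auto

lemma has_derivative_sum_list_scaleR:
  fixes L :: "(('a::euclidean_space \<Rightarrow> real) \<times> ('a \<Rightarrow> 'b::real_normed_vector)) list"
  assumes U: "open U" and L: "\<forall>(a, b)\<in>set L. smooth_on U a \<and> smooth_on U b" and y: "y \<in> U"
  shows "((\<lambda>y. \<Sum>(a, b)\<leftarrow>L. a y *\<^sub>R b y) has_derivative
      (\<lambda>h. \<Sum>(a, b)\<leftarrow>L. a y *\<^sub>R frechet_derivative b (at y) h + frechet_derivative a (at y) h *\<^sub>R b y)) (at y)"
  using L
proof (induction L)
  case Nil
  then show ?case by simp
next
  case (Cons p L)
  obtain a b where p: "p = (a, b)" by fastforce
  have "(a has_derivative frechet_derivative a (at y)) (at y)" "(b has_derivative frechet_derivative b (at y)) (at y)"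
    using Cons.prems y p by (auto intro: smooth_on_has_derivative[OF U])
  then show ?case
    using Cons p by (auto intro!: has_derivative_add has_derivative_scaleR)
qed

text \<open>By the product rule \<open>(a b)' = a b' + a' b\<close>, smoothness of products has to be proved
  for finite sums of products simultaneously.\<close>

lemma smooth_on_sum_list_scaleR:
  fixes L :: "(('a::euclidean_space \<Rightarrow> real) \<times> ('a \<Rightarrow> 'b::real_normed_vector)) list"
  assumes U: "open U" and L: "\<forall>(a, b)\<in>set L. smooth_on U a \<and> smooth_on U b"
  shows "smooth_on U (\<lambda>y. \<Sum>(a, b)\<leftarrow>L. a y *\<^sub>R b y)"
proof -
  define P :: "('a \<Rightarrow> 'b) \<Rightarrow> bool" where "P k \<longleftrightarrow> (\<exists>L. (\<forall>(a, b)\<in>set L. smooth_on U a \<and> smooth_on U b)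
     \<and> k = (\<lambda>y. \<Sum>(a, b)\<leftarrow>L. a y *\<^sub>R b y))" for k
  show ?thesis
  proof (rule smooth_on_coinduct_open[OF U, where P=P and h="\<lambda>y. \<Sum>(a, b)\<leftarrow>L. a y *\<^sub>R b y"])
    show "P (\<lambda>y. \<Sum>(a, b)\<leftarrow>L. a y *\<^sub>R b y)" using L unfolding P_def by blast
  next
    fix k assume "P k"
    then obtain L where L: "\<forall>(a, b)\<in>set L. smooth_on U a \<and> smooth_on U b"
      and k: "k = (\<lambda>y. \<Sum>(a, b)\<leftarrow>L. a y *\<^sub>R b y)" unfolding P_def by blast
    show "k differentiable_on U"
      unfolding differentiable_on_eq_differentiable_at[OF U] differentiable_def k
      using has_derivative_sum_list_scaleR[OF U L] by blast
    fix v
    define L' where "L' = concat (map (\<lambda>(a, b). [(a, \<lambda>y. frechet_derivative b (at y) v),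
        (\<lambda>y. frechet_derivative a (at y) v, b)]) L)"
    have "\<forall>(a, b)\<in>set L'. smooth_on U a \<and> smooth_on U b"
      using L unfolding L'_def by (fastforce dest: smooth_onD(2))
    moreover have "frechet_derivative k (at y) v = (\<Sum>(a, b)\<leftarrow>L'. a y *\<^sub>R b y)" if "y \<in> U" for y
    proof -
      have "frechet_derivative k (at y) v
          = (\<Sum>(a, b)\<leftarrow>L. a y *\<^sub>R frechet_derivative b (at y) v + frechet_derivative a (at y) v *\<^sub>R b y)"
        unfolding k frechet_derivative_at[OF has_derivative_sum_list_scaleR[OF U L that], symmetric] ..
      also have "\<dots> = (\<Sum>(a, b)\<leftarrow>L'. a y *\<^sub>R b y)"
        unfolding L'_def by (induction L) auto
      finally show ?thesis .
    qed
    ultimately show "\<exists>k'. P k' \<and> (\<forall>y\<in>U. frechet_derivative k (at y) v = k' y)"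
      unfolding P_def by blast
  qed (rule refl)
qed

lemma smooth_on_scaleR:
  assumes "open U" "smooth_on U a" "smooth_on U b"
  shows "smooth_on U (\<lambda>y. a y *\<^sub>R b y)"
  using smooth_on_sum_list_scaleR[OF assms(1), of "[(a, b)]"] assms by simp

lemma smooth_on_add:
  assumes "open U" "smooth_on U a" "smooth_on U b"
  shows "smooth_on U (\<lambda>y. a y + b y)"
  using smooth_on_sum_list_scaleR[OF assms(1), of "[(\<lambda>_. 1, a), (\<lambda>_. 1, b)]"] assms
  by (simp add: smooth_on_const)

lemma smooth_on_sum:
  assumes "open U" "\<And>i. i \<in> I \<Longrightarrow> smooth_on U (F i)"
  shows "smooth_on U (\<lambda>y. \<Sum>i\<in>I. F i y)"
  using assms(2)
proof (induction I rule: infinite_finite_induct)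
  case (insert i I)
  then show ?case by (simp add: smooth_on_add[OF assms(1)])
qed (simp_all add: smooth_on_const)

lemma smooth_on_bounded_linear:
  assumes U: "open U" and L: "bounded_linear L" and h: "smooth_on U h"
  shows "smooth_on U (\<lambda>y. L (h y))"
proof (rule smooth_on_coinduct_open[OF U, where P="\<lambda>k. \<exists>h. smooth_on U h \<and> k = (\<lambda>y. L (h y))"
      and h="\<lambda>y. L (h y)"])
  fix k assume "\<exists>h. smooth_on U h \<and> k = (\<lambda>y. L (h y))"
  then obtain h where h: "smooth_on U h" and k: "k = (\<lambda>y. L (h y))" by blast
  have deriv: "(k has_derivative (\<lambda>z. L (frechet_derivative h (at y) z))) (at y)" if "y \<in> U" for y
    unfolding k by (rule bounded_linear.has_derivative[OF L smooth_on_has_derivative[OF U h that]])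
  then show "k differentiable_on U"
    unfolding differentiable_on_eq_differentiable_at[OF U] differentiable_def by blast
  fix v
  have "\<forall>y\<in>U. frechet_derivative k (at y) v = L (frechet_derivative h (at y) v)"
    using frechet_derivative_at[OF deriv] by (metis (mono_tags))
  then show "\<exists>k'. (\<exists>h. smooth_on U h \<and> k' = (\<lambda>y. L (h y))) \<and> (\<forall>y\<in>U. frechet_derivative k (at y) v = k' y)"
    using smooth_onD(2)[OF h] by blast
qed (use h in auto)

lemma linear_eq_sum_Basis:
  fixes f :: "'a::euclidean_space \<Rightarrow> 'b::real_vector"
  assumes "linear f"
  shows "f x = (\<Sum>i\<in>Basis. (x \<bullet> i) *\<^sub>R f i)"
proof -
  have "f x = f (\<Sum>i\<in>Basis. (x \<bullet> i) *\<^sub>R i)" by (simp add: euclidean_representation)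
  also have "\<dots> = (\<Sum>i\<in>Basis. (x \<bullet> i) *\<^sub>R f i)" using assms by (simp add: linear_sum linear_scale)
  finally show ?thesis .
qed

lemma smooth_on_apply_tensor:
  fixes \<Phi> :: "'a::euclidean_space \<Rightarrow> 'a \<Rightarrow> 'b::real_normed_vector"
  assumes U: "open U" and lin: "\<forall>x\<in>U. linear (\<Phi> x)" and \<Phi>: "\<forall>v. smooth_on U (\<lambda>x. \<Phi> x v)"
    and Y: "smooth_on U Y"
  shows "smooth_on U (\<lambda>y. \<Phi> y (Y y))"
proof (rule smooth_on_cong[OF U])
  have "smooth_on U (\<lambda>y. Y y \<bullet> i)" for i
    by (rule smooth_on_bounded_linear[OF U bounded_linear_inner_left Y])
  then show "smooth_on U (\<lambda>y. \<Sum>i\<in>Basis. (Y y \<bullet> i) *\<^sub>R \<Phi> y i)"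
    using \<Phi> by (simp add: smooth_on_sum smooth_on_scaleR U)
  show "(\<Sum>i\<in>Basis. (Y y \<bullet> i) *\<^sub>R \<Phi> y i) = \<Phi> y (Y y)" if "y \<in> U" for y
    using lin that linear_eq_sum_Basis by metis
qed

section \<open>Symmetry of second derivatives\<close>

definition second_derivative :: "('a::euclidean_space \<Rightarrow> 'b::real_normed_vector) \<Rightarrow> 'a \<Rightarrow> 'a \<Rightarrow> 'a \<Rightarrow> 'b" where
  "second_derivative f x u v = frechet_derivative (\<lambda>y. frechet_derivative f (at y) v) (at x) u"

lemma smooth_on_second_derivative:
  "smooth_on U f \<Longrightarrow> smooth_on U (\<lambda>y. second_derivative f y u v)"
  unfolding second_derivative_def by (intro smooth_onD(2))

lemma has_derivative_frechet_derivative_apply: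
  assumes "open U" "smooth_on U f" "x \<in> U"
  shows "((\<lambda>y. frechet_derivative f (at y) v) has_derivative (\<lambda>u. second_derivative f x u v)) (at x)"
  unfolding second_derivative_def
  using smooth_on_has_derivative[OF assms(1) smooth_onD(2)[OF assms(2)] assms(3)] .

lemma second_derivative_eq_sum_Basis:
  assumes U: "open U" and f: "smooth_on U f" and x: "x \<in> U"
  shows "second_derivative f x u v = (\<Sum>i\<in>Basis. (v \<bullet> i) *\<^sub>R second_derivative f x u i)"
proof -
  have hd: "((\<lambda>y. \<Sum>i\<in>Basis. (v \<bullet> i) *\<^sub>R frechet_derivative f (at y) i) has_derivative
      (\<lambda>u. \<Sum>i\<in>Basis. (v \<bullet> i) *\<^sub>R second_derivative f x u i)) (at x)"
    by (intro has_derivative_sum has_derivative_scaleR_right has_derivative_frechet_derivative_apply[OF U f x])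
  have "frechet_derivative f (at y) v = (\<Sum>i\<in>Basis. (v \<bullet> i) *\<^sub>R frechet_derivative f (at y) i)"
    if "y \<in> U" for y
    using linear_eq_sum_Basis[OF smooth_on_linear_frechet_derivative[OF U f that]] .
  then have "((\<lambda>y. frechet_derivative f (at y) v) has_derivative
      (\<lambda>u. \<Sum>i\<in>Basis. (v \<bullet> i) *\<^sub>R second_derivative f x u i)) (at x)"
    using has_derivative_transform_within_open[OF hd U x] by auto
  from has_derivative_unique[OF has_derivative_frechet_derivative_apply[OF U f x] this]
  show ?thesis by metis
qed

lemma has_derivative_push:
  fixes f :: "'a::euclidean_space \<Rightarrow> 'b::euclidean_space"
  assumes U: "open U" and f: "smooth_on U f" and B: "smooth_on U B" and x: "x \<in> U"
  shows "(push f B has_derivative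
      (\<lambda>u. second_derivative f x u (B x) + frechet_derivative f (at x) (frechet_derivative B (at x) u))) (at x)"
proof -
  have hd: "((\<lambda>y. \<Sum>i\<in>Basis. (B y \<bullet> i) *\<^sub>R frechet_derivative f (at y) i) has_derivative
      (\<lambda>u. \<Sum>i\<in>Basis. (B x \<bullet> i) *\<^sub>R second_derivative f x u i
        + (frechet_derivative B (at x) u \<bullet> i) *\<^sub>R frechet_derivative f (at x) i)) (at x)"
    by (intro has_derivative_sum has_derivative_scaleR has_derivative_frechet_derivative_apply[OF U f x]
        has_derivative_inner_left smooth_on_has_derivative[OF U B x])
  have eq: "push f B y = (\<Sum>i\<in>Basis. (B y \<bullet> i) *\<^sub>R frechet_derivative f (at y) i)" if "y \<in> U" for y
    unfolding push_def by (rule linear_eq_sum_Basis[OF smooth_on_linear_frechet_derivative[OF U f that]])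
  have "(\<lambda>u. \<Sum>i\<in>Basis. (B x \<bullet> i) *\<^sub>R second_derivative f x u i
        + (frechet_derivative B (at x) u \<bullet> i) *\<^sub>R frechet_derivative f (at x) i)
      = (\<lambda>u. second_derivative f x u (B x) + frechet_derivative f (at x) (frechet_derivative B (at x) u))"
  proof
    fix u
    show "(\<Sum>i\<in>Basis. (B x \<bullet> i) *\<^sub>R second_derivative f x u i
        + (frechet_derivative B (at x) u \<bullet> i) *\<^sub>R frechet_derivative f (at x) i)
      = second_derivative f x u (B x) + frechet_derivative f (at x) (frechet_derivative B (at x) u)"
      unfolding sum.distrib second_derivative_eq_sum_Basis[OF U f x, of u "B x"]
        linear_eq_sum_Basis[OF smooth_on_linear_frechet_derivative[OF U f x], of "frechet_derivative B (at x) u"] ..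
  qed
  with has_derivative_transform_within_open[OF hd U x, of "push f B"] eq show ?thesis by auto
qed

lemma dd_push:
  fixes f :: "'a::euclidean_space \<Rightarrow> 'b::euclidean_space"
  assumes "open U" "smooth_on U f" "smooth_on U B" "x \<in> U"
  shows "dd (push f B) A x = second_derivative f x (A x) (B x) + frechet_derivative f (at x) (dd B A x)"
  unfolding dd_def frechet_derivative_at[OF has_derivative_push[OF assms], symmetric] ..

lemma mean_value_inner_line:
  fixes k :: "'a::real_normed_vector \<Rightarrow> 'b::real_inner"
  assumes s: "0 < s" and hd: "\<And>t. 0 \<le> t \<Longrightarrow> t \<le> s \<Longrightarrow> (k has_derivative K t) (at (p + t *\<^sub>R q))"
  shows "\<exists>t\<in>{0<..<s}. (k (p + s *\<^sub>R q) - k p) \<bullet> w = s * (K t q \<bullet> w)"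
proof -
  have "\<exists>t\<in>{0<..<s}. k (p + s *\<^sub>R q) \<bullet> w - k (p + 0 *\<^sub>R q) \<bullet> w = K t ((s - 0) *\<^sub>R q) \<bullet> w"
  proof (rule mvt_simple[OF s])
    fix t assume t: "0 \<le> t" "t \<le> s"
    have "((\<lambda>t. p + t *\<^sub>R q) has_derivative (\<lambda>d. d *\<^sub>R q)) (at t within {0..s})"
      by (intro derivative_eq_intros) auto
    from has_derivative_inner_left[OF has_derivative_compose[OF this hd[OF t]]]
    show "((\<lambda>t. k (p + t *\<^sub>R q) \<bullet> w) has_derivative (\<lambda>d. K t (d *\<^sub>R q) \<bullet> w)) (at t within {0..s})" .
  qed
  moreover have "K t (s *\<^sub>R q) = s *\<^sub>R K t q" if "t \<in> {0<..<s}" for t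
    using has_derivative_linear[OF hd] that by (simp add: linear_scale)
  ultimately show ?thesis by (auto simp: inner_diff_left)
qed

lemma dist_add_scaleR_le:
  fixes x u v :: "'a::real_normed_vector"
  assumes "0 \<le> t" "t \<le> s" "0 \<le> r" "r \<le> s"
  shows "dist (x + t *\<^sub>R u + r *\<^sub>R v) x \<le> s * (norm u + norm v)"
proof -
  have "dist (x + t *\<^sub>R u + r *\<^sub>R v) x \<le> norm (t *\<^sub>R u) + norm (r *\<^sub>R v)"
    unfolding dist_norm by (simp add: norm_triangle_ineq del: norm_scaleR)
  also have "\<dots> \<le> s * norm u + s * norm v"
    using assms by (simp add: add_mono mult_right_mono)
  finally show ?thesis by (simp add: distrib_left)
qed

lemma second_difference_mean_value:
  fixes h :: "'a::euclidean_space \<Rightarrow> 'b::euclidean_space"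
  assumes U: "open U" and h: "smooth_on U h" and s: "0 < s"
    and cb: "cball x (s * (norm u + norm v)) \<subseteq> U"
  shows "\<exists>z. dist z x \<le> s * (norm u + norm v) \<and>
    (h (x + s *\<^sub>R u + s *\<^sub>R v) - h (x + s *\<^sub>R u) - h (x + s *\<^sub>R v) + h x) \<bullet> w
      = s\<^sup>2 * (second_derivative h z v u \<bullet> w)"
proof -
  have inU: "x + t *\<^sub>R u + r *\<^sub>R v \<in> U" if "0 \<le> t" "t \<le> s" "0 \<le> r" "r \<le> s" for t r
    using dist_add_scaleR_le[OF that, of x u v] cb by (auto simp: dist_commute subset_iff)
  define k where "k y = h (y + s *\<^sub>R v) - h y" for y
  have "\<exists>t\<in>{0<..<s}. (k (x + s *\<^sub>R u) - k x) \<bullet> w =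
     s * ((frechet_derivative h (at (x + t *\<^sub>R u + s *\<^sub>R v)) u - frechet_derivative h (at (x + t *\<^sub>R u)) u) \<bullet> w)"
  proof (rule mean_value_inner_line[OF s, where K="\<lambda>t d. frechet_derivative h (at (x + t *\<^sub>R u + s *\<^sub>R v)) d
      - frechet_derivative h (at (x + t *\<^sub>R u)) d"])
    fix t assume t: "0 \<le> t" "t \<le> s"
    have "((\<lambda>y. y + s *\<^sub>R v) has_derivative (\<lambda>d. d)) (at (x + t *\<^sub>R u))"
      by (intro derivative_eq_intros) auto
    from has_derivative_compose[OF this smooth_on_has_derivative[OF U h inU[OF t, of s]]] s
      has_derivative_diff[OF _ smooth_on_has_derivative[OF U h inU[OF t, of 0]]]
    show "(k has_derivative (\<lambda>d. frechet_derivative h (at (x + t *\<^sub>R u + s *\<^sub>R v)) d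
        - frechet_derivative h (at (x + t *\<^sub>R u)) d)) (at (x + t *\<^sub>R u))"
      unfolding k_def by simp
  qed
  then obtain t where t: "t \<in> {0<..<s}" and e1: "(k (x + s *\<^sub>R u) - k x) \<bullet> w =
     s * ((frechet_derivative h (at (x + t *\<^sub>R u + s *\<^sub>R v)) u - frechet_derivative h (at (x + t *\<^sub>R u)) u) \<bullet> w)"
    by blast
  have "\<exists>r\<in>{0<..<s}. (frechet_derivative h (at (x + t *\<^sub>R u + s *\<^sub>R v)) u
      - frechet_derivative h (at (x + t *\<^sub>R u)) u) \<bullet> w = s * (second_derivative h (x + t *\<^sub>R u + r *\<^sub>R v) v u \<bullet> w)"
    using mean_value_inner_line[OF s, of "\<lambda>y. frechet_derivative h (at y) u" "\<lambda>r d. second_derivative h (x + t *\<^sub>R u + r *\<^sub>R v) d u"]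
      has_derivative_frechet_derivative_apply[OF U h inU] t by auto
  then obtain r where r: "r \<in> {0<..<s}" and e2: "(frechet_derivative h (at (x + t *\<^sub>R u + s *\<^sub>R v)) u
      - frechet_derivative h (at (x + t *\<^sub>R u)) u) \<bullet> w = s * (second_derivative h (x + t *\<^sub>R u + r *\<^sub>R v) v u \<bullet> w)"
    by blast
  have "h (x + s *\<^sub>R u + s *\<^sub>R v) - h (x + s *\<^sub>R u) - h (x + s *\<^sub>R v) + h x = k (x + s *\<^sub>R u) - k x"
    unfolding k_def by (simp add: algebra_simps)
  then show ?thesis
    using e1 e2 dist_add_scaleR_le[of t s r x u v] t r by (intro exI[of _ "x + t *\<^sub>R u + r *\<^sub>R v"]) (simp add: power2_eq_square)
qed

lemma continuous_on_eq_if_arbitrarily_close: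
  fixes A B :: "'a::metric_space \<Rightarrow> 'b::metric_space"
  assumes "continuous_on U A" "continuous_on U B" "x \<in> U"
    and close: "\<And>e. 0 < e \<Longrightarrow> \<exists>z\<in>U. \<exists>z'\<in>U. dist z x < e \<and> dist z' x < e \<and> A z = B z'"
  shows "A x = B x"
proof (rule ccontr)
  assume "A x \<noteq> B x"
  then have d: "dist (A x) (B x) / 2 > 0" by simp
  obtain dA where dA: "dA > 0" "\<And>y. y \<in> U \<Longrightarrow> dist y x < dA \<Longrightarrow> dist (A y) (A x) < dist (A x) (B x) / 2"
    using assms(1,3) d unfolding continuous_on_iff by blast
  obtain dB where dB: "dB > 0" "\<And>y. y \<in> U \<Longrightarrow> dist y x < dB \<Longrightarrow> dist (B y) (B x) < dist (A x) (B x) / 2"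
    using assms(2,3) d unfolding continuous_on_iff by blast
  obtain z z' where "z \<in> U" "z' \<in> U" "dist z x < min dA dB" "dist z' x < min dA dB" "A z = B z'"
    using close[of "min dA dB"] dA dB by auto
  then have "dist (A x) (B x) < dist (A x) (B x) / 2 + dist (A x) (B x) / 2"
    using dA(2)[of z] dB(2)[of z'] dist_triangle3[of "A x" "B x" "A z"] by (simp add: dist_commute)
  then show False by simp
qed

text \<open>The second difference is symmetric in \<open>u\<close> and \<open>v\<close>, so it equals \<open>s\<^sup>2\<close> times both
  mixed second derivatives at nearby points; continuity lets \<open>s \<rightarrow> 0\<close>.\<close>

lemma second_derivative_commute:
  fixes h :: "'a::euclidean_space \<Rightarrow> 'b::euclidean_space"
  assumes U: "open U" and h: "smooth_on U h" and x: "x \<in> U"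
  shows "second_derivative h x u v = second_derivative h x v u"
proof -
  define w where "w = second_derivative h x v u - second_derivative h x u v"
  define A where "A y = second_derivative h y v u \<bullet> w" for y
  define B where "B y = second_derivative h y u v \<bullet> w" for y
  have "continuous_on U A" "continuous_on U B"
    unfolding A_def B_def
    by (intro continuous_on_inner continuous_on_const differentiable_imp_continuous_on
        smooth_onD(1)[OF smooth_on_second_derivative[OF h]])+
  moreover have "\<exists>z\<in>U. \<exists>z'\<in>U. dist z x < e \<and> dist z' x < e \<and> A z = B z'" if e: "0 < e" for e
  proof -
    obtain e0 where e0: "e0 > 0" "cball x e0 \<subseteq> U" using open_contains_cball U x by blast
    define s where "s = min e e0 / (norm u + norm v + 1)"
    have n: "norm u + norm v + 1 > 0" by (simp add: add_nonneg_pos)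
    then have s0: "0 < s" unfolding s_def using e e0 by simp
    then have "s * (norm u + norm v) < s * (norm u + norm v + 1)" by simp
    also have "\<dots> = min e e0" unfolding s_def using n by simp
    finally have s: "0 < s" "s * (norm u + norm v) < min e e0" using s0 by auto
    then have cb: "cball x (s * (norm u + norm v)) \<subseteq> U" "cball x (s * (norm v + norm u)) \<subseteq> U"
      using e0 by (auto simp: add.commute intro!: order.trans[OF subset_cball])
    obtain z where z: "dist z x \<le> s * (norm u + norm v)"
      "(h (x + s *\<^sub>R u + s *\<^sub>R v) - h (x + s *\<^sub>R u) - h (x + s *\<^sub>R v) + h x) \<bullet> w = s\<^sup>2 * A z"
      using second_difference_mean_value[OF U h s(1) cb(1)] unfolding A_def by blast
    obtain z' where z': "dist z' x \<le> s * (norm v + norm u)"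
      "(h (x + s *\<^sub>R v + s *\<^sub>R u) - h (x + s *\<^sub>R v) - h (x + s *\<^sub>R u) + h x) \<bullet> w = s\<^sup>2 * B z'"
      using second_difference_mean_value[OF U h s(1) cb(2)] unfolding B_def by blast
    have "A z = B z'"
      using z(2) z'(2) s(1) by (simp add: algebra_simps)
    moreover have "z \<in> U" "z' \<in> U"
      using z(1) z'(1) cb by (auto simp: dist_commute subset_iff)
    ultimately show ?thesis
      using z(1) z'(1) s(2) by (intro bexI[of _ z] bexI[of _ z']) (auto simp: add.commute)
  qed
  ultimately have "A x = B x" by (rule continuous_on_eq_if_arbitrarily_close[OF _ _ x])
  then have "w \<bullet> w = 0" unfolding A_def B_def w_def by (simp add: inner_diff_left)
  then show ?thesis unfolding w_def by simp
qed

section \<open>The Gauss formula\<close>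

lemma dd_push_commute:
  fixes f :: "'a::euclidean_space \<Rightarrow> 'b::euclidean_space"
  assumes U: "open U" and f: "smooth_on U f" and A: "smooth_on U A" and B: "smooth_on U B" and x: "x \<in> U"
  shows "dd (push f B) A x - dd (push f A) B x = frechet_derivative f (at x) (dd B A x - dd A B x)"
  unfolding dd_push[OF U f A x] dd_push[OF U f B x] second_derivative_commute[OF U f x, of "A x"]
  using smooth_on_linear_frechet_derivative[OF U f x] by (simp add: linear_diff)

lemma dd_induced_metric:
  fixes f :: "'a::euclidean_space \<Rightarrow> 'b::euclidean_space"
  assumes U: "open U" and f: "smooth_on U f" and B: "smooth_on U B" and C: "smooth_on U C" and x: "x \<in> U"
  shows "dd (\<lambda>y. induced_metric f y (B y) (C y)) A x
     = dd (push f B) A x \<bullet> frechet_derivative f (at x) (C x) + frechet_derivative f (at x) (B x) \<bullet> dd (push f C) A x"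
proof -
  have metric: "(\<lambda>y. induced_metric f y (B y) (C y)) = (\<lambda>y. push f B y \<bullet> push f C y)"
    by (simp add: induced_metric_def push_def)
  have deriv: "((\<lambda>y. push f B y \<bullet> push f C y) has_derivative (\<lambda>d. push f B x \<bullet> frechet_derivative (push f C) (at x) d
      + frechet_derivative (push f B) (at x) d \<bullet> push f C x)) (at x)"
    using has_derivative_push[OF U f B x] has_derivative_push[OF U f C x]
    by (intro has_derivative_inner) (auto simp: frechet_derivative_at[symmetric])
  show ?thesis
    unfolding dd_def metric frechet_derivative_at[OF deriv, symmetric] by (simp add: push_def inner_commute)
qed

lemma levi_civita_torsion_free:
  "levi_civita U G nab \<Longrightarrow> smooth_on U X \<Longrightarrow> smooth_on U Y \<Longrightarrow> x \<in> U \<Longrightarrow>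
    nab X Y x - nab Y X x = dd Y X x - dd X Y x"
  unfolding levi_civita_def by blast

lemma levi_civita_metric_compatible:
  "levi_civita U G nab \<Longrightarrow> smooth_on U X \<Longrightarrow> smooth_on U Y \<Longrightarrow> smooth_on U Z \<Longrightarrow> x \<in> U \<Longrightarrow>
    dd (\<lambda>y. G y (Y y) (Z y)) X x = G x (nab X Y x) (Z x) + G x (Y x) (nab X Z x)"
  unfolding levi_civita_def by blast

lemma koszul_identity:
  fixes NXW NWX NXZ NZX NWZ NZW FX FW FZ tXW tXZ tWZ :: "'b::real_inner"
  assumes "d1 = NXW \<bullet> FZ + FW \<bullet> NXZ" "d2 = NWX \<bullet> FZ + FX \<bullet> NWZ" "d3 = NZX \<bullet> FW + FX \<bullet> NZW"
    and "NXW - NWX = tXW" "NXZ - NZX = tXZ" "NWZ - NZW = tWZ"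
  shows "2 * (NXW \<bullet> FZ) = d1 + d2 - d3 + tXW \<bullet> FZ - tXZ \<bullet> FW - tWZ \<bullet> FX"
  unfolding assms(4-6)[symmetric] assms(1-3) by (simp add: inner_diff_left inner_commute algebra_simps)

text \<open>Both \<open>f\<^sub>*\<nabla>\<^sub>XW\<close> and the flat ambient derivative \<open>D\<^sub>X f\<^sub>*W\<close> satisfy the Koszul formula
  against \<open>f\<^sub>*Z\<close>, so they have the same tangential part.\<close>

lemma dd_push_levi_civita_orthogonal:
  fixes f :: "'a::euclidean_space \<Rightarrow> 'b::euclidean_space"
  assumes U: "open U" and f: "smooth_on U f" and lc: "levi_civita U (induced_metric f) nab"
    and X: "smooth_on U X" and W: "smooth_on U W" and x: "x \<in> U"
  shows "(dd (push f W) X x - frechet_derivative f (at x) (nab X W x)) \<bullet> frechet_derivative f (at x) c = 0"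
proof -
  define Z :: "'a \<Rightarrow> 'a" where "Z = (\<lambda>_. c)"
  have Z: "smooth_on U Z" unfolding Z_def by (rule smooth_on_const)
  define F where "F = frechet_derivative f (at x)"
  define T where "T A B = dd (push f B) A x" for A B
  define g where "g A B = dd (\<lambda>y. induced_metric f y (A y) (B y))" for A B
  have metric_nab: "g A B C x = F (nab C A x) \<bullet> F (B x) + F (A x) \<bullet> F (nab C B x)"
    if "smooth_on U A" "smooth_on U B" "smooth_on U C" for A B C
    using levi_civita_metric_compatible[OF lc that(3,1,2) x] unfolding g_def F_def induced_metric_def .
  have metric_T: "g A B C x = T C A \<bullet> F (B x) + F (A x) \<bullet> T C B"
    if "smooth_on U A" "smooth_on U B" for A B C
    unfolding g_def T_def F_def by (rule dd_induced_metric[OF U f that x])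
  have torsion_nab: "F (nab A B x) - F (nab B A x) = F (dd B A x - dd A B x)"
    if "smooth_on U A" "smooth_on U B" for A B
    using levi_civita_torsion_free[OF lc that x] smooth_on_linear_frechet_derivative[OF U f x]
    unfolding F_def by (metis linear_diff)
  have torsion_T: "T A B - T B A = F (dd B A x - dd A B x)"
    if "smooth_on U A" "smooth_on U B" for A B
    unfolding T_def F_def by (rule dd_push_commute[OF U f that x])
  have "2 * (F (nab X W x) \<bullet> F (Z x)) = 2 * (T X W \<bullet> F (Z x))"
    unfolding koszul_identity[OF metric_nab[OF W Z X] metric_nab[OF X Z W] metric_nab[OF X W Z]
        torsion_nab[OF X W] torsion_nab[OF X Z] torsion_nab[OF W Z]]
      koszul_identity[OF metric_T[OF W Z] metric_T[OF X Z] metric_T[OF X W]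
        torsion_T[OF X W] torsion_T[OF X Z] torsion_T[OF W Z]] ..
  then show ?thesis unfolding T_def F_def Z_def by (simp add: inner_diff_left)
qed

lemma normal_part_eqI:
  fixes f :: "'a::euclidean_space \<Rightarrow> 'b::euclidean_space"
  assumes lin: "linear (frechet_derivative f (at x))"
    and n: "\<And>v. n \<bullet> frechet_derivative f (at x) v = 0" "w - n \<in> range (frechet_derivative f (at x))"
  shows "normal_part f x w = n"
  unfolding normal_part_def
proof (rule the_equality)
  fix m assume m: "(\<forall>v. m \<bullet> frechet_derivative f (at x) v = 0) \<and> w - m \<in> range (frechet_derivative f (at x))"
  have "(w - n) - (w - m) \<in> range (frechet_derivative f (at x))"
    using subspace_diff[OF linear_subspace_image[OF lin subspace_UNIV]] m n(2) by blast
  then obtain v where v: "m - n = frechet_derivative f (at x) v" by (auto simp: algebra_simps)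
  have "(m - n) \<bullet> (m - n) = m \<bullet> frechet_derivative f (at x) v - n \<bullet> frechet_derivative f (at x) v"
    unfolding inner_diff_left[symmetric] v[symmetric] ..
  then have "(m - n) \<bullet> (m - n) = 0" using m n(1) by simp
  then show "m = n" by simp
qed (use n in blast)

lemma normal_part_exists:
  fixes f :: "'a::euclidean_space \<Rightarrow> 'b::euclidean_space"
  assumes lin: "linear (frechet_derivative f (at x))"
  shows "\<exists>n. (\<forall>v. n \<bullet> frechet_derivative f (at x) v = 0) \<and> w - n \<in> range (frechet_derivative f (at x))"
proof -
  have span: "span (range (frechet_derivative f (at x))) = range (frechet_derivative f (at x))"
    using linear_subspace_image[OF lin subspace_UNIV] by simp
  obtain y n where "y \<in> range (frechet_derivative f (at x))"
    and "\<And>u. u \<in> range (frechet_derivative f (at x)) \<Longrightarrow> orthogonal n u" and "w = y + n"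
    using orthogonal_subspace_decomp_exists[of "range (frechet_derivative f (at x))" w] unfolding span by blast
  then show ?thesis by (intro exI[of _ n]) (auto simp: orthogonal_def)
qed

lemma normal_part_eq_if_diff_tangent:
  fixes f :: "'a::euclidean_space \<Rightarrow> 'b::euclidean_space"
  assumes lin: "linear (frechet_derivative f (at x))"
    and d: "w1 - w2 \<in> range (frechet_derivative f (at x))"
  shows "normal_part f x w1 = normal_part f x w2"
proof -
  obtain n where n: "\<forall>v. n \<bullet> frechet_derivative f (at x) v = 0" "w2 - n \<in> range (frechet_derivative f (at x))"
    using normal_part_exists[OF lin] by blast
  have "(w1 - w2) + (w2 - n) \<in> range (frechet_derivative f (at x))"
    using subspace_add[OF linear_subspace_image[OF lin subspace_UNIV] d n(2)] .
  then have "normal_part f x w1 = n" using normal_part_eqI[OF lin, of n w1] n(1) by simp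
  moreover have "normal_part f x w2 = n" using normal_part_eqI[OF lin, of n w2] n by simp
  ultimately show ?thesis by simp
qed

lemma normal_part_cong_range:
  fixes f g :: "'a::euclidean_space \<Rightarrow> 'b::euclidean_space"
  assumes "range (frechet_derivative g (at x)) = range (frechet_derivative f (at x))"
  shows "normal_part g x = normal_part f x"
proof -
  have orth: "(\<forall>v. n \<bullet> frechet_derivative h (at x) v = 0) \<longleftrightarrow> (\<forall>z\<in>range (frechet_derivative h (at x)). n \<bullet> z = 0)"
    for n and h :: "'a \<Rightarrow> 'b"
    by auto
  show ?thesis unfolding normal_part_def orth assms ..
qed

lemma gauss_formula:
  fixes f :: "'a::euclidean_space \<Rightarrow> 'b::euclidean_space"
  assumes U: "open U" and f: "smooth_on U f" and lc: "levi_civita U (induced_metric f) nab"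
    and X: "smooth_on U X" and W: "smooth_on U W" and x: "x \<in> U"
  shows "dd (push f W) X x = frechet_derivative f (at x) (nab X W x) + sff f X W x"
proof -
  have "sff f X W x = dd (push f W) X x - frechet_derivative f (at x) (nab X W x)"
    unfolding sff_def using dd_push_levi_civita_orthogonal[OF U f lc X W x]
    by (intro normal_part_eqI smooth_on_linear_frechet_derivative[OF U f x]) auto
  then show ?thesis by simp
qed

lemma sff_commute:
  fixes f :: "'a::euclidean_space \<Rightarrow> 'b::euclidean_space"
  assumes U: "open U" and f: "smooth_on U f" and X: "smooth_on U X" and Y: "smooth_on U Y" and x: "x \<in> U"
  shows "sff f X Y x = sff f Y X x"
  unfolding sff_def
  using dd_push_commute[OF U f X Y x]
  by (intro normal_part_eq_if_diff_tangent smooth_on_linear_frechet_derivative[OF U f x]) auto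

section \<open>Immersions related by a tensor field\<close>

lemma range_comp_linear_eq:
  fixes P :: "'a::euclidean_space \<Rightarrow> 'a"
  assumes "linear P" "inj (\<lambda>v. F (P v))"
  shows "range (\<lambda>v. F (P v)) = range F"
proof -
  have "inj P" using assms(2) unfolding inj_def by auto
  then have "surj P" using linear_injective_imp_surjective[OF assms(1)] by simp
  then show ?thesis unfolding image_image[of F P UNIV, symmetric] by simp
qed

lemma dd_push_related:
  fixes f g :: "'a::euclidean_space \<Rightarrow> 'b::euclidean_space"
  assumes "open U" "x \<in> U" "\<forall>y\<in>U. \<forall>v. frechet_derivative g (at y) v = frechet_derivative f (at y) (\<Phi> y v)"
  shows "dd (push g Y) X x = dd (push f (\<lambda>y. \<Phi> y (Y y))) X x"
  unfolding dd_def using frechet_derivative_cong_open[OF assms(1,2), of "push g Y" "push f (\<lambda>y. \<Phi> y (Y y))"] assms(3)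
  by (simp add: push_def)

theorem proposition2p2:
  fixes U :: "'a::euclidean_space set"
    and f g :: "'a \<Rightarrow> 'b::euclidean_space"
    and \<Phi> :: "'a \<Rightarrow> 'a \<Rightarrow> 'a"
    and nab nabt :: "('a \<Rightarrow> 'a) \<Rightarrow> ('a \<Rightarrow> 'a) \<Rightarrow> 'a \<Rightarrow> 'a"
    and X Y :: "'a \<Rightarrow> 'a"
  assumes "open U"
    and "immersion U f" and "immersion U g"
    and "\<forall>x\<in>U. linear (\<Phi> x)"
    and "\<forall>v. smooth_on U (\<lambda>x. \<Phi> x v)"
    and "\<forall>x\<in>U. \<forall>v. frechet_derivative g (at x) v = frechet_derivative f (at x) (\<Phi> x v)"
    and "levi_civita U (induced_metric f) nab"
    and "levi_civita U (induced_metric g) nabt"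
    and "smooth_on U X" and "smooth_on U Y"
    and "x \<in> U"
  shows "\<Phi> x (nabt X Y x) = nab X (\<lambda>y. \<Phi> y (Y y)) x \<and>
         sff g X Y x = sff f (\<lambda>y. \<Phi> y (X y)) Y x"
proof -
  note U = assms(1) and lin = assms(4) and \<Phi> = assms(5) and gf = assms(6)
    and X = assms(9) and Y = assms(10) and x = assms(11)
  have f: "smooth_on U f" "inj (frechet_derivative f (at x))"
    and g: "smooth_on U g" "inj (frechet_derivative g (at x))"
    using assms(2,3) x unfolding immersion_def by auto
  have \<Phi>X: "smooth_on U (\<lambda>y. \<Phi> y (X y))" and \<Phi>Y: "smooth_on U (\<lambda>y. \<Phi> y (Y y))"
    using smooth_on_apply_tensor[OF U lin \<Phi>] X Y by auto
  have "frechet_derivative g (at x) = (\<lambda>v. frechet_derivative f (at x) (\<Phi> x v))"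
    using gf x by auto
  then have tangent_spaces: "range (frechet_derivative g (at x)) = range (frechet_derivative f (at x))"
    using range_comp_linear_eq[of "\<Phi> x" "frechet_derivative f (at x)"] lin g(2) x by simp
  have sff_transfer: "sff g A B x = sff f A (\<lambda>y. \<Phi> y (B y)) x" for A B
    unfolding sff_def normal_part_cong_range[OF tangent_spaces] dd_push_related[OF U x gf] ..
  have "frechet_derivative f (at x) (\<Phi> x (nabt X Y x)) = dd (push g Y) X x - sff g X Y x"
    using gauss_formula[OF U g(1) assms(8) X Y x] gf x by simp
  also have "\<dots> = frechet_derivative f (at x) (nab X (\<lambda>y. \<Phi> y (Y y)) x)"
    using gauss_formula[OF U f(1) assms(7) X \<Phi>Y x] sff_transfer dd_push_related[OF U x gf] by simp
  finally have "\<Phi> x (nabt X Y x) = nab X (\<lambda>y. \<Phi> y (Y y)) x"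
    using f(2) by (simp add: inj_eq)
  moreover have "sff g X Y x = sff f (\<lambda>y. \<Phi> y (X y)) Y x"
    using sff_commute[OF U g(1) X Y x] sff_transfer sff_commute[OF U f(1) Y \<Phi>X x] by simp
  ultimately show ?thesis ..
qed

end
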